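(* There is no connected tricyclic graph $G$ with exactly two main eigenvalues such that the graph $G_0$ obtained from $G$ by deleting all pendant vertices belongs to $\mathcal{T}_5$.
   Context: All graphs are finite, undirected and simple. A connected graph $G$ is tricyclic if $|E(G)|=|V(G)|+2$. An eigenvalue of $G$ (of its adjacency matrix) is a main eigenvalue if it has an eigenvector whose entries do not sum to zero. A pendant vertex is a vertex of degree one. $\mathcal{T}_5$ is the class of simple graphs obtained as follows: take three distinct vertices $A,B,C$ and five pairwise internally vertex-disjoint paths, each with at least one edge, avoiding $A,B,C$ in their interiors: one path joining $A$ and $C$, two paths joining $A$ and $B$, and two paths joining $B$ and $C$ (so that $A$ and $C$ have degree $3$, $B$ has degree $4$, and all other vertices have degree $2$). *)

theory Defs
  imports Complex_Main
begin

definition simple_graph :: "'a set \<Rightarrow> 'a set set \<Rightarrow> bool" where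
  "simple_graph V E \<longleftrightarrow> finite V \<and>
     (\<forall>e\<in>E. \<exists>u v. e = {u, v} \<and> u \<noteq> v \<and> u \<in> V \<and> v \<in> V)"

definition adj :: "'a set set \<Rightarrow> 'a \<Rightarrow> 'a \<Rightarrow> bool" where
  "adj E u v \<longleftrightarrow> {u, v} \<in> E"

definition connected_graph :: "'a set \<Rightarrow> 'a set set \<Rightarrow> bool" where
  "connected_graph V E \<longleftrightarrow> V \<noteq> {} \<and>
     (\<forall>u\<in>V. \<forall>v\<in>V. (u, v) \<in> {(x, y). adj E x y}\<^sup>*)"

definition degree :: "'a set set \<Rightarrow> 'a \<Rightarrow> nat" where
  "degree E v = card {e \<in> E. v \<in> e}"

text \<open>Action of the adjacency matrix on a vector indexed by V.\<close>
definition adj_mult :: "'a set \<Rightarrow> 'a set set \<Rightarrow> ('a \<Rightarrow> real) \<Rightarrow> 'a \<Rightarrow> real" where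
  "adj_mult V E x v = (\<Sum>u\<in>{u \<in> V. adj E u v}. x u)"

definition is_eigenvector :: "'a set \<Rightarrow> 'a set set \<Rightarrow> real \<Rightarrow> ('a \<Rightarrow> real) \<Rightarrow> bool" where
  "is_eigenvector V E \<mu> x \<longleftrightarrow> (\<exists>v\<in>V. x v \<noteq> 0) \<and> (\<forall>v\<in>V. adj_mult V E x v = \<mu> * x v)"

definition main_eigenvalue :: "'a set \<Rightarrow> 'a set set \<Rightarrow> real \<Rightarrow> bool" where
  "main_eigenvalue V E \<mu> \<longleftrightarrow> (\<exists>x. is_eigenvector V E \<mu> x \<and> (\<Sum>v\<in>V. x v) \<noteq> 0)"

definition pendant_vertices :: "'a set \<Rightarrow> 'a set set \<Rightarrow> 'a set" where
  "pendant_vertices V E = {v \<in> V. degree E v = 1}"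

definition del_pendant_V :: "'a set \<Rightarrow> 'a set set \<Rightarrow> 'a set" where
  "del_pendant_V V E = V - pendant_vertices V E"

definition del_pendant_E :: "'a set \<Rightarrow> 'a set set \<Rightarrow> 'a set set" where
  "del_pendant_E V E = {e \<in> E. e \<subseteq> del_pendant_V V E}"

definition path_edges :: "'a list \<Rightarrow> 'a set set" where
  "path_edges p = {{p ! i, p ! Suc i} | i. Suc i < length p}"

definition interior :: "'a list \<Rightarrow> 'a set" where
  "interior p = set (butlast (tl p))"

definition is_path_between :: "'a list \<Rightarrow> 'a \<Rightarrow> 'a \<Rightarrow> bool" where
  "is_path_between p a b \<longleftrightarrow> distinct p \<and> length p \<ge> 2 \<and> hd p = a \<and> last p = b"

text \<open>Edge-disjointness of the paths (needed for a
  simple graph with deg A = deg C = 3, deg B = 4) is required explicitly.\<close>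
definition in_T5 :: "'a set \<Rightarrow> 'a set set \<Rightarrow> bool" where
  "in_T5 V E \<longleftrightarrow>
    (\<exists>A B C p1 p2 p3 p4 p5.
       distinct [A, B, C] \<and>
       is_path_between p1 A C \<and>
       is_path_between p2 A B \<and> is_path_between p3 A B \<and>
       is_path_between p4 B C \<and> is_path_between p5 B C \<and>
       (let ps = [p1, p2, p3, p4, p5] in
          (\<forall>i<5. interior (ps ! i) \<inter> {A, B, C} = {}) \<and>
          (\<forall>i<5. \<forall>j<5. i \<noteq> j \<longrightarrow> interior (ps ! i) \<inter> set (ps ! j) = {}) \<and>
          (\<forall>i<5. \<forall>j<5. i \<noteq> j \<longrightarrow> path_edges (ps ! i) \<inter> path_edges (ps ! j) = {}) \<and>
          V = (\<Union>i<5. set (ps ! i)) \<and>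
          E = (\<Union>i<5. path_edges (ps ! i))))"

end

theory Submission
  imports Defs "HOL-Computational_Algebra.Fundamental_Theorem_Algebra"
begin

text \<open>
  Let \<open>d\<close> be the degree function of \<open>G\<close>. If \<open>G\<close> has exactly two main eigenvalues then
  \<open>A\<^sup>2\<one> = a A\<one> + b\<one>\<close> for some \<open>a, b\<close>, i.e. \<open>\<Sum>\<^bsub>u\<sim>v\<^esub> d(u) = a d(v) + b\<close> at every vertex:
  the minimal polynomial of \<open>\<one>\<close> with respect to the symmetric matrix \<open>A\<close> has only real,
  simple roots, each of them a main eigenvalue, so it has degree at most two.
  A pendant vertex forces its neighbour to have degree \<open>a + b\<close>. Hence on the core \<open>G\<^sub>0\<close>
  every vertex \<open>v\<close> with \<open>h\<close> core neighbours has \<open>d(v) = h\<close> or \<open>d(v) = a + b > h\<close>, and its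
  core neighbours have degree sum \<open>(a - 1) d(v) + b + h\<close>. For \<open>G\<^sub>0 \<in> \<T>\<^sub>5\<close> these constraints,
  written out at the branch vertices and along the five paths near their ends, are
  inconsistent: by hand when \<open>a + b \<ge> 9\<close>, by a finite case analysis otherwise.
\<close>

section \<open>Graphs with two main eigenvalues\<close>

lemma ex_nontrivial_combination_vanishing_on:
  fixes f :: "'i \<Rightarrow> 'a \<Rightarrow> real"
  assumes "finite W" "finite I" "card W < card I"
  shows "\<exists>c. (\<exists>i\<in>I. c i \<noteq> 0) \<and> (\<forall>v\<in>W. (\<Sum>i\<in>I. c i * f i v) = 0)"
  using assms
proof (induction W arbitrary: I f rule: finite_induct)
  case empty
  then obtain i0 where "i0 \<in> I" by fastforce
  then show ?case by (intro exI[of _ "\<lambda>_. 1"]) auto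
next
  case (insert w W)
  show ?case
  proof (cases "\<forall>i\<in>I. f i w = 0")
    case True
    have "card W < card I" using insert by simp
    then obtain c where "\<exists>i\<in>I. c i \<noteq> 0" "\<forall>v\<in>W. (\<Sum>i\<in>I. c i * f i v) = 0"
      using insert.IH[OF insert.prems(1)] by blast
    then show ?thesis using True by (intro exI[of _ c]) auto
  next
    case False
    then obtain i0 where i0: "i0 \<in> I" "f i0 w \<noteq> 0" by auto
    define I' where "I' = I - {i0}"
    \<comment> \<open>Gaussian elimination: clear the \<open>w\<close>-entries using \<open>f i0\<close>.\<close>
    define g where "g i v = f i v - (f i w / f i0 w) * f i0 v" for i v
    have "finite I'" "card W < card I'"
      using insert i0 unfolding I'_def by (simp_all add: card_Diff_singleton)
    then obtain c' where c': "\<exists>i\<in>I'. c' i \<noteq> 0" "\<forall>v\<in>W. (\<Sum>i\<in>I'. c' i * g i v) = 0"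
      using insert.IH by blast
    define c where "c = c'(i0 := - (\<Sum>i\<in>I'. c' i * f i w) / f i0 w)"
    have comb: "(\<Sum>i\<in>I. c i * f i v) = (\<Sum>i\<in>I'. c' i * g i v)" for v
    proof -
      have "(\<Sum>i\<in>I. c i * f i v) = c i0 * f i0 v + (\<Sum>i\<in>I'. c' i * f i v)"
        unfolding I'_def c_def using insert.prems(1) i0(1)
        by (auto simp: sum.remove intro!: sum.cong)
      moreover have "(\<Sum>i\<in>I'. c' i * g i v)
          = (\<Sum>i\<in>I'. c' i * f i v) - (\<Sum>i\<in>I'. c' i * f i w) / f i0 w * f i0 v"
        unfolding g_def
        by (simp add: right_diff_distrib sum_subtractf sum_distrib_right sum_divide_distrib mult.assoc)
      ultimately show ?thesis unfolding c_def by simp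
    qed
    have "(\<Sum>i\<in>I. c i * f i v) = 0" if "v \<in> insert w W" for v
      using that c'(2) i0(2) unfolding comb g_def by auto
    moreover have "\<exists>i\<in>I. c i \<noteq> 0"
    proof -
      from c'(1) obtain i where "i \<in> I'" "c' i \<noteq> 0" by blast
      then show ?thesis unfolding c_def I'_def by (intro bexI[of _ i]) auto
    qed
    ultimately show ?thesis by blast
  qed
qed

lemma map_poly_of_real_add:
  "map_poly complex_of_real (p + q) = map_poly of_real p + map_poly of_real q"
  by (rule poly_eqI) (simp add: coeff_map_poly)

lemma map_poly_of_real_mult:
  "map_poly complex_of_real (p * q) = map_poly of_real p * map_poly of_real q"
proof (induction p rule: pCons_induct)
  case (pCons a p)
  have "map_poly complex_of_real (smult a q) = smult (of_real a) (map_poly of_real q)"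
    by (rule poly_eqI) (simp add: coeff_map_poly)
  with pCons show ?case by (simp add: map_poly_of_real_add map_poly_pCons)
qed simp

lemma poly_map_poly_of_real: "poly (map_poly complex_of_real p) (of_real x) = of_real (poly p x)"
  by (induction p rule: pCons_induct) (simp_all add: map_poly_pCons)

definition real_rooted :: "real poly \<Rightarrow> bool" where
  "real_rooted p \<longleftrightarrow> (\<forall>z. poly (map_poly complex_of_real p) z = 0 \<longrightarrow> Im z = 0)"

lemma real_rooted_dvd: "real_rooted p \<Longrightarrow> q dvd p \<Longrightarrow> real_rooted q"
  unfolding real_rooted_def by (auto elim!: dvdE simp: map_poly_of_real_mult)

lemma real_rooted_linear_factor:
  assumes "real_rooted p" "degree p > 0"
  obtains \<mu> q where "p = [:-\<mu>, 1:] * q"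
proof -
  have "\<not> constant (poly (map_poly complex_of_real p))"
    using assms(2) by (simp add: constant_degree degree_map_poly)
  then obtain z where z: "poly (map_poly complex_of_real p) z = 0"
    using fundamental_theorem_of_algebra by blast
  then have "z = of_real (Re z)"
    using assms(1) unfolding real_rooted_def by (simp add: complex_eq_iff)
  then have "poly p (Re z) = 0"
    using z poly_map_poly_of_real by (metis of_real_eq_0_iff)
  then show ?thesis using that by (metis dvdE poly_eq_0_iff_dvd)
qed

lemma real_rooted_split_root:
  assumes "real_rooted p" "p \<noteq> 0" "degree p > k"
  obtains \<mu> q where "p = [:-\<mu>, 1:] * q" "q \<noteq> 0" "degree q \<ge> k" "real_rooted q"
proof -
  obtain \<mu> q where pq: "p = [:-\<mu>, 1:] * q"
    using real_rooted_linear_factor[OF assms(1)] assms(3) by auto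
  then have "q \<noteq> 0" using assms(2) by auto
  moreover have "degree q \<ge> k" using assms(3) pq \<open>q \<noteq> 0\<close> degree_mult_eq[of "[:-\<mu>, 1:]" q] by auto
  moreover have "real_rooted q" using real_rooted_dvd[OF assms(1), of q] pq by (metis dvd_triv_right)
  ultimately show ?thesis using that pq by blast
qed

lemma real_rooted_three_roots:
  assumes "real_rooted m" "m \<noteq> 0" "degree m \<ge> 3"
    and no_double_root: "\<And>\<mu>. \<not> [:-\<mu>, 1:]\<^sup>2 dvd m"
  shows "\<exists>\<mu>1 \<mu>2 \<mu>3. distinct [\<mu>1, \<mu>2, \<mu>3] \<and> poly m \<mu>1 = 0 \<and> poly m \<mu>2 = 0 \<and> poly m \<mu>3 = 0"
proof -
  have "degree m > 2" using assms(3) by simp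
  then obtain \<mu>1 m1 where m1: "m = [:-\<mu>1, 1:] * m1" "m1 \<noteq> 0" "degree m1 \<ge> 2" "real_rooted m1"
    by (rule real_rooted_split_root[OF assms(1,2)])
  have "degree m1 > 1" using m1(3) by simp
  then obtain \<mu>2 m2 where m2: "m1 = [:-\<mu>2, 1:] * m2" "m2 \<noteq> 0" "degree m2 \<ge> 1" "real_rooted m2"
    by (rule real_rooted_split_root[OF m1(4,2)])
  have "degree m2 > 0" using m2(3) by simp
  then obtain \<mu>3 m3 where m3: "m2 = [:-\<mu>3, 1:] * m3" "m3 \<noteq> 0" "degree m3 \<ge> 0" "real_rooted m3"
    by (rule real_rooted_split_root[OF m2(4,2)])
  have m_eq: "m = [:-\<mu>1, 1:] * ([:-\<mu>2, 1:] * ([:-\<mu>3, 1:] * m3))"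
    using m1(1) m2(1) m3(1) by (simp only:)
  have no_square: "m \<noteq> [:-\<mu>, 1:] * ([:-\<mu>, 1:] * q)" for \<mu> q
    using no_double_root[of \<mu>] unfolding power2_eq_square by (metis dvd_triv_left mult.assoc)
  have "\<mu>1 \<noteq> \<mu>2"
    using no_square[of \<mu>1 "[:-\<mu>3, 1:] * m3"] unfolding m_eq by blast
  moreover have "\<mu>1 \<noteq> \<mu>3"
  proof
    assume "\<mu>1 = \<mu>3"
    then have "m = [:-\<mu>1, 1:] * ([:-\<mu>1, 1:] * ([:-\<mu>2, 1:] * m3))"
      unfolding m_eq by (simp only: mult.left_commute)
    then show False using no_square by blast
  qed
  moreover have "\<mu>2 \<noteq> \<mu>3"
  proof
    assume "\<mu>2 = \<mu>3"
    then have "m = [:-\<mu>2, 1:] * ([:-\<mu>2, 1:] * ([:-\<mu>1, 1:] * m3))"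
      unfolding m_eq by (simp only: mult.left_commute)
    then show False using no_square by blast
  qed
  moreover have "poly m \<mu>1 = 0" "poly m \<mu>2 = 0" "poly m \<mu>3 = 0"
    unfolding m_eq by simp_all
  ultimately show ?thesis by (intro exI[of _ \<mu>1] exI[of _ \<mu>2] exI[of _ \<mu>3]) simp
qed

lemma complex_root_imp_quadratic_dvd:
  fixes m :: "real poly"
  assumes z: "poly (map_poly complex_of_real m) z = 0" and t: "Im z \<noteq> 0"
  shows "[:Re z * Re z + Im z * Im z, -2 * Re z, 1:] dvd m"
proof -
  define Q where "Q = [:Re z * Re z + Im z * Im z, -2 * Re z, 1:]"
  define r where "r = m mod Q"
  have "degree r \<le> 1"
    using degree_mod_less[of Q m] unfolding r_def Q_def by (cases "m mod Q = 0") auto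
  then obtain c0 c1 where r: "r = [:c0, c1:]"
    by (intro that[of "coeff r 0" "coeff r 1"] poly_eqI)
      (auto simp: coeff_pCons coeff_eq_0 split: nat.split)
  have "map_poly complex_of_real m
      = map_poly of_real Q * map_poly of_real (m div Q) + map_poly of_real r"
    unfolding r_def by (simp flip: map_poly_of_real_mult map_poly_of_real_add)
  moreover have "poly (map_poly complex_of_real Q) z = 0"
    unfolding Q_def by (simp add: map_poly_pCons complex_eq_iff algebra_simps power2_eq_square)
  ultimately have "poly (map_poly complex_of_real r) z = 0" using z by simp
  then have "of_real c0 + z * of_real c1 = 0" unfolding r by (simp add: map_poly_pCons)
  then have "r = 0" unfolding r using t by (auto simp: complex_eq_iff)
  then show ?thesis unfolding r_def Q_def by (simp add: mod_eq_0_iff_dvd)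
qed

definition neighbours :: "'a set set \<Rightarrow> 'a \<Rightarrow> 'a set" where
  "neighbours E v = {u. {u, v} \<in> E}"

locale finite_graph =
  fixes V :: "'a set" and E :: "'a set set"
  assumes simple: "simple_graph V E"
begin

lemma finite_V: "finite V"
  using simple unfolding simple_graph_def by auto

lemma adj_in_V: "adj E u v \<Longrightarrow> u \<in> V \<and> v \<in> V \<and> u \<noteq> v"
  using simple unfolding adj_def simple_graph_def by (fastforce simp: doubleton_eq_iff)

lemma adj_commute: "adj E u v = adj E v u"
  unfolding adj_def by (simp add: insert_commute)

lemma neighbours_eq: "neighbours E v = {u \<in> V. adj E u v}"
  using adj_in_V unfolding neighbours_def adj_def by auto

lemma finite_neighbours: "finite (neighbours E v)"
  using finite_V unfolding neighbours_eq by auto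

lemma degree_eq_card_neighbours: "Defs.degree E v = card (neighbours E v)"
proof -
  have "bij_betw (\<lambda>u. {u, v}) (neighbours E v) {e \<in> E. v \<in> e}"
  proof (rule bij_betwI')
    show "{x, v} = {y, v} \<longleftrightarrow> x = y" if "x \<in> neighbours E v" "y \<in> neighbours E v" for x y
      using that adj_in_V unfolding neighbours_eq by (auto simp: doubleton_eq_iff)
    show "{u, v} \<in> {e \<in> E. v \<in> e}" if "u \<in> neighbours E v" for u
      using that unfolding neighbours_def by auto
    show "\<exists>u\<in>neighbours E v. e = {u, v}" if e: "e \<in> {e \<in> E. v \<in> e}" for e
    proof -
      obtain x y where "e = {x, y}"
        using e simple unfolding simple_graph_def by blast
      then obtain u where "e = {u, v}"
        using e by (auto simp: insert_commute)
      then show ?thesis using e unfolding neighbours_def by auto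
    qed
  qed
  then show ?thesis unfolding Defs.degree_def by (simp add: bij_betw_same_card)
qed

definition adj_op :: "('a \<Rightarrow> real) \<Rightarrow> 'a \<Rightarrow> real" where
  "adj_op x v = adj_mult V E x v"

definition dot :: "('a \<Rightarrow> real) \<Rightarrow> ('a \<Rightarrow> real) \<Rightarrow> real" where
  "dot x y = (\<Sum>v\<in>V. x v * y v)"

definition supported :: "('a \<Rightarrow> real) \<Rightarrow> bool" where
  "supported x \<longleftrightarrow> (\<forall>v. v \<notin> V \<longrightarrow> x v = 0)"

definition ones :: "'a \<Rightarrow> real" where
  "ones v = (if v \<in> V then 1 else 0)"

lemma adj_op_eq_sum: "adj_op x v = (\<Sum>u\<in>V. if adj E u v then x u else 0)"
  unfolding adj_op_def adj_mult_def using finite_V by (simp add: sum.inter_filter)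

lemma supported_adj_op: "supported (adj_op x)"
  unfolding supported_def adj_op_eq_sum using adj_in_V by (auto intro!: sum.neutral)

lemma supported_ones: "supported ones"
  unfolding supported_def ones_def by simp

lemma supported_eqI: "supported x \<Longrightarrow> supported y \<Longrightarrow> (\<And>v. v \<in> V \<Longrightarrow> x v = y v) \<Longrightarrow> x = y"
  unfolding supported_def by fastforce

lemma adj_op_eq_sum_neighbours: "adj_op x v = (\<Sum>u\<in>neighbours E v. x u)"
  unfolding adj_op_def adj_mult_def neighbours_eq ..

lemma adj_op_ones: "adj_op ones v = Defs.degree E v"
  unfolding adj_op_eq_sum_neighbours degree_eq_card_neighbours ones_def
  using neighbours_eq by simp

lemma adj_op_add: "adj_op (\<lambda>v. x v + y v) = (\<lambda>v. adj_op x v + adj_op y v)"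
  unfolding adj_op_eq_sum by (auto simp: sum.distrib[symmetric] intro!: sum.cong)

lemma adj_op_scale: "adj_op (\<lambda>v. c * x v) = (\<lambda>v. c * adj_op x v)"
  unfolding adj_op_eq_sum by (auto simp: sum_distrib_left intro!: sum.cong)

lemma adj_op_sum: "adj_op (\<lambda>v. \<Sum>i\<in>I. f i v) = (\<lambda>v. \<Sum>i\<in>I. adj_op (f i) v)"
  unfolding adj_op_eq_sum by (subst sum.swap) (auto intro!: sum.cong)

lemma dot_adj_op_commute: "dot (adj_op x) y = dot x (adj_op y)"
proof -
  have "dot (adj_op x) y = (\<Sum>v\<in>V. \<Sum>u\<in>V. if adj E u v then x u * y v else 0)"
    unfolding dot_def adj_op_eq_sum by (auto simp: sum_distrib_right intro!: sum.cong)
  also have "\<dots> = (\<Sum>u\<in>V. \<Sum>v\<in>V. if adj E u v then x u * y v else 0)"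
    by (rule sum.swap)
  also have "\<dots> = dot x (adj_op y)"
    unfolding dot_def adj_op_eq_sum by (auto simp: sum_distrib_left adj_commute intro!: sum.cong)
  finally show ?thesis .
qed

lemma dot_self_nonneg: "dot x x \<ge> 0"
  unfolding dot_def by (intro sum_nonneg) auto

lemma dot_self_pos:
  assumes "supported x" "x \<noteq> (\<lambda>v. 0)"
  shows "dot x x > 0"
proof -
  obtain w where w: "x w \<noteq> 0" using assms(2) by auto
  then have "w \<in> V" using assms(1) unfolding supported_def by auto
  then have "x w * x w \<le> dot x x"
    unfolding dot_def using finite_V by (intro member_le_sum) auto
  moreover have "x w * x w > 0" using w not_real_square_gt_zero by blast
  ultimately show ?thesis by linarith
qed

definition poly_op :: "real poly \<Rightarrow> ('a \<Rightarrow> real) \<Rightarrow> 'a \<Rightarrow> real" where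
  "poly_op p x v = (\<Sum>i\<le>degree p. coeff p i * (adj_op ^^ i) x v)"

lemma poly_op_eq_sum:
  assumes "degree p \<le> n"
  shows "poly_op p x v = (\<Sum>i\<le>n. coeff p i * (adj_op ^^ i) x v)"
proof -
  have "(\<Sum>i\<le>n. coeff p i * (adj_op ^^ i) x v)
      = (\<Sum>i\<le>degree p. coeff p i * (adj_op ^^ i) x v)
        + (\<Sum>i\<in>{degree p<..n}. coeff p i * (adj_op ^^ i) x v)"
    using assms by (subst sum.union_disjoint[symmetric]) (auto intro!: sum.cong)
  also have "(\<Sum>i\<in>{degree p<..n}. coeff p i * (adj_op ^^ i) x v) = 0"
    by (auto intro!: sum.neutral simp: coeff_eq_0)
  finally show ?thesis unfolding poly_op_def by simp
qed

lemma poly_op_pCons: "poly_op (pCons a p) x = (\<lambda>v. a * x v + adj_op (poly_op p x) v)"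
proof
  fix v
  have "poly_op (pCons a p) x v = (\<Sum>i\<le>Suc (degree p). coeff (pCons a p) i * (adj_op ^^ i) x v)"
    by (rule poly_op_eq_sum) (simp add: degree_pCons_le)
  also have "\<dots> = a * x v + (\<Sum>i\<le>degree p. coeff p i * (adj_op ^^ Suc i) x v)"
    by (subst sum.atMost_Suc_shift) simp
  also have "(\<Sum>i\<le>degree p. coeff p i * (adj_op ^^ Suc i) x v) = adj_op (poly_op p x) v"
    unfolding poly_op_def[abs_def] by (simp add: adj_op_sum adj_op_scale)
  finally show "poly_op (pCons a p) x v = a * x v + adj_op (poly_op p x) v" .
qed

lemma poly_op_0: "poly_op 0 x = (\<lambda>v. 0)"
  unfolding poly_op_def by simp

lemma poly_op_add: "poly_op (p + q) x = (\<lambda>v. poly_op p x v + poly_op q x v)"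
proof
  fix v
  let ?n = "max (degree p) (degree q)"
  have "degree (p + q) \<le> ?n" by (rule degree_add_le) auto
  then show "poly_op (p + q) x v = poly_op p x v + poly_op q x v"
    by (simp add: poly_op_eq_sum[of _ ?n] sum.distrib distrib_right)
qed

lemma poly_op_smult: "poly_op (smult c p) x = (\<lambda>v. c * poly_op p x v)"
  by (rule ext) (simp add: poly_op_eq_sum[of "smult c p" "degree p"] poly_op_def
      sum_distrib_left mult.assoc)

lemma poly_op_mult: "poly_op (p * q) x = poly_op p (poly_op q x)"
proof (induction p rule: pCons_induct)
  case 0
  show ?case by (simp add: poly_op_0)
next
  case (pCons a p)
  have "poly_op (pCons a p * q) x = poly_op (smult a q + pCons 0 (p * q)) x" by simp
  also have "\<dots> = poly_op (pCons a p) (poly_op q x)"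
    by (simp add: poly_op_add poly_op_smult poly_op_pCons pCons.IH)
  finally show ?case .
qed

lemma supported_poly_op: "supported x \<Longrightarrow> supported (poly_op p x)"
  using supported_adj_op unfolding supported_def
  by (induction p rule: pCons_induct) (auto simp: poly_op_0 poly_op_pCons)

lemma poly_op_adj_op_commute: "poly_op p (adj_op y) = adj_op (poly_op p y)"
  by (induction p rule: pCons_induct)
    (simp_all add: poly_op_0 poly_op_pCons adj_op_add adj_op_scale adj_op_scale[of 0, simplified])

lemma dot_poly_op_commute: "dot (poly_op p x) y = dot x (poly_op p y)"
proof (induction p arbitrary: y rule: pCons_induct)
  case 0
  show ?case by (simp add: poly_op_0 dot_def)
next
  case (pCons a p)
  have "dot (poly_op (pCons a p) x) y = a * dot x y + dot (adj_op (poly_op p x)) y"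
    by (simp add: poly_op_pCons dot_def distrib_right sum.distrib sum_distrib_left mult.assoc)
  also have "dot (adj_op (poly_op p x)) y = dot x (poly_op p (adj_op y))"
    by (simp add: dot_adj_op_commute pCons.IH)
  finally show ?case
    by (simp add: poly_op_pCons poly_op_adj_op_commute dot_def distrib_left sum.distrib
        sum_distrib_left mult.left_commute)
qed

lemma poly_op_eigenvector:
  assumes "adj_op y = (\<lambda>v. \<mu> * y v)"
  shows "poly_op p y = (\<lambda>v. poly p \<mu> * y v)"
proof (induction p rule: pCons_induct)
  case 0
  show ?case by (simp add: poly_op_0)
next
  case (pCons a p)
  have "adj_op (poly_op p y) = (\<lambda>v. poly p \<mu> * (\<mu> * y v))"
    by (simp only: pCons.IH adj_op_scale assms)
  then show ?case
    by (simp add: poly_op_pCons algebra_simps)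
qed

lemma poly_op_linear: "poly_op [:c, 1:] y = (\<lambda>v. c * y v + adj_op y v)"
  by (simp add: poly_op_pCons poly_op_0 adj_op_scale[of 0, simplified])

lemma poly_op_quadratic:
  "poly_op [:c0, c1, 1:] y = (\<lambda>v. c0 * y v + c1 * adj_op y v + adj_op (adj_op y) v)"
  by (simp add: poly_op_pCons poly_op_0 adj_op_add adj_op_scale adj_op_scale[of 0, simplified]
      add.assoc)

lemma ex_annihilating_poly: "\<exists>p. p \<noteq> 0 \<and> poly_op p ones = (\<lambda>v. 0)"
proof -
  let ?n = "card V"
  obtain c where c: "\<exists>i\<in>{..?n}. c i \<noteq> 0"
    "\<forall>v\<in>V. (\<Sum>i\<in>{..?n}. c i * (adj_op ^^ i) ones v) = 0"
    using ex_nontrivial_combination_vanishing_on[OF finite_V, of "{..?n}" "\<lambda>i. (adj_op ^^ i) ones"]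
    by auto
  define p where "p = (\<Sum>i\<le>?n. monom (c i) i)"
  have coeff_p: "coeff p i = (if i \<le> ?n then c i else 0)" for i
    unfolding p_def by (simp add: coeff_sum coeff_monom)
  have "degree p \<le> ?n" by (rule degree_le) (simp add: coeff_p)
  have "p \<noteq> 0" using c(1) coeff_p by (metis atMost_iff coeff_0)
  moreover have "poly_op p ones = (\<lambda>v. 0)"
  proof (rule supported_eqI)
    show "supported (poly_op p ones)" by (rule supported_poly_op[OF supported_ones])
    show "poly_op p ones v = 0" if "v \<in> V" for v
      using c(2) that by (simp add: poly_op_eq_sum[OF \<open>degree p \<le> ?n\<close>] coeff_p)
  qed (simp add: supported_def)
  ultimately show ?thesis by blast
qed

definition min_annihilator :: "real poly \<Rightarrow> bool" where
  "min_annihilator m \<longleftrightarrow> m \<noteq> 0 \<and> poly_op m ones = (\<lambda>v. 0) \<and>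
     (\<forall>q. q \<noteq> 0 \<and> degree q < degree m \<longrightarrow> poly_op q ones \<noteq> (\<lambda>v. 0))"

lemma ex_min_annihilator: "\<exists>m. min_annihilator m"
proof -
  obtain p where "p \<noteq> 0 \<and> poly_op p ones = (\<lambda>v. 0)"
    using ex_annihilating_poly by blast
  then obtain m where "m \<noteq> 0 \<and> poly_op m ones = (\<lambda>v. 0)"
    and "\<forall>q. q \<noteq> 0 \<and> poly_op q ones = (\<lambda>v. 0) \<longrightarrow> degree m \<le> degree q"
    using ex_has_least_nat[of "\<lambda>p. p \<noteq> 0 \<and> poly_op p ones = (\<lambda>v. 0)" p degree] by blast
  then show ?thesis unfolding min_annihilator_def by (blast dest: leD)
qed

lemma degree_linear_pos: "degree [:c, 1 :: real:] > 0"
  and degree_quadratic_pos: "degree [:c0, c1, 1 :: real:] > 0"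
  by simp_all

context
  fixes m :: "real poly"
  assumes min: "min_annihilator m"
begin

lemma min_annihilator_cofactor:
  assumes "m = f * q" "degree f > 0"
  shows "poly_op f (poly_op q ones) = (\<lambda>v. 0)" "supported (poly_op q ones)"
    "poly_op q ones \<noteq> (\<lambda>v. 0)"
proof -
  show "poly_op f (poly_op q ones) = (\<lambda>v. 0)"
    using min assms(1) unfolding min_annihilator_def by (simp add: poly_op_mult[symmetric])
  show "supported (poly_op q ones)" by (rule supported_poly_op[OF supported_ones])
  have "q \<noteq> 0" "f \<noteq> 0" using min assms unfolding min_annihilator_def by auto
  then have "degree q < degree m" using assms by (simp add: degree_mult_eq)
  then show "poly_op q ones \<noteq> (\<lambda>v. 0)"
    using min \<open>q \<noteq> 0\<close> unfolding min_annihilator_def by blast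
qed

lemma min_annihilator_root_main:
  assumes "poly m \<mu> = 0"
  shows "main_eigenvalue V E \<mu>"
proof -
  obtain q where q: "m = [:-\<mu>, 1:] * q" using assms by (metis dvdE poly_eq_0_iff_dvd)
  define y where "y = poly_op q ones"
  note y = min_annihilator_cofactor[OF q degree_linear_pos, folded y_def]
  have eigen: "adj_op y = (\<lambda>v. \<mu> * y v)"
    using y(1) unfolding poly_op_linear by (simp add: fun_eq_iff)
  obtain w where "y w \<noteq> 0" using y(3) by auto
  then have "\<exists>v\<in>V. y v \<noteq> 0" using y(2) unfolding supported_def by auto
  with eigen have "is_eigenvector V E \<mu> y"
    unfolding is_eigenvector_def adj_op_def by metis
  \<comment> \<open>\<open>\<langle>y, y\<rangle> = \<langle>1, q(A) y\<rangle> = q(\<mu>) \<Sigma>y\<close>, and \<open>\<langle>y, y\<rangle> > 0\<close>.\<close>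
  moreover have "(\<Sum>v\<in>V. y v) \<noteq> 0"
  proof
    assume "(\<Sum>v\<in>V. y v) = 0"
    moreover have "dot y y = dot ones (poly_op q y)"
      unfolding y_def by (rule dot_poly_op_commute)
    then have "dot y y = poly q \<mu> * (\<Sum>v\<in>V. y v)"
      by (simp add: poly_op_eigenvector[OF eigen] dot_def ones_def sum_distrib_left)
    ultimately show False using dot_self_pos[OF y(2,3)] by simp
  qed
  ultimately show ?thesis unfolding main_eigenvalue_def by blast
qed

lemma min_annihilator_no_double_root: "\<not> [:-\<mu>, 1:]\<^sup>2 dvd m"
proof
  assume "[:-\<mu>, 1:]\<^sup>2 dvd m"
  then obtain q where "m = [:-\<mu>, 1:]\<^sup>2 * q" by (rule dvdE)
  then have "m = [:-\<mu>, 1:] * ([:-\<mu>, 1:] * q)" by (simp only: power2_eq_square mult.assoc)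
  note y = min_annihilator_cofactor[OF this degree_linear_pos]
  \<comment> \<open>\<open>y = (A - \<mu>) q(A) 1\<close> is killed by \<open>A - \<mu>\<close>, hence orthogonal to itself.\<close>
  define y where "y = poly_op ([:-\<mu>, 1:] * q) ones"
  have "dot y y = dot (poly_op q ones) (poly_op [:-\<mu>, 1:] y)"
    unfolding y_def poly_op_mult by (rule dot_poly_op_commute)
  also have "\<dots> = 0" using y(1) unfolding y_def by (simp add: dot_def)
  finally show False using dot_self_pos[OF y(2,3)] unfolding y_def by simp
qed

lemma min_annihilator_real_rooted: "real_rooted m"
proof (rule ccontr)
  assume "\<not> real_rooted m"
  then obtain z where z: "poly (map_poly complex_of_real m) z = 0" "Im z \<noteq> 0"
    unfolding real_rooted_def by blast
  define x t where "x = Re z" and "t = Im z"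
  from complex_root_imp_quadratic_dvd[OF z, folded x_def t_def]
  obtain q where "m = [:x * x + t * t, -2 * x, 1:] * q" by (rule dvdE)
  note y = min_annihilator_cofactor[OF this degree_quadratic_pos]
  define y where "y = poly_op q ones"
  define w where "w v = adj_op y v - x * y v" for v
  \<comment> \<open>\<open>\<langle>((A - x)\<^sup>2 + t\<^sup>2) y, y\<rangle> = |(A - x) y|\<^sup>2 + t\<^sup>2 |y|\<^sup>2 > 0\<close>.\<close>
  have "dot (poly_op [:x * x + t * t, -2 * x, 1:] y) y
      = (x * x + t * t) * dot y y - 2 * x * dot (adj_op y) y + dot (adj_op (adj_op y)) y"
    unfolding poly_op_quadratic dot_def
    by (simp add: sum.distrib sum_subtractf sum_distrib_left algebra_simps)
  also have "dot (adj_op (adj_op y)) y = dot (adj_op y) (adj_op y)"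
    by (rule dot_adj_op_commute)
  also have "(x * x + t * t) * dot y y - 2 * x * dot (adj_op y) y + dot (adj_op y) (adj_op y)
      = dot w w + t * t * dot y y"
    unfolding w_def dot_def by (simp add: sum.distrib sum_subtractf sum_distrib_left algebra_simps)
  finally have "dot (poly_op [:x * x + t * t, -2 * x, 1:] y) y = dot w w + t * t * dot y y" .
  moreover have "t * t > 0" using z(2) not_real_square_gt_zero unfolding t_def by blast
  then have "t * t * dot y y > 0"
    using dot_self_pos[OF y(2,3)] unfolding y_def by simp
  moreover have "dot (poly_op [:x * x + t * t, -2 * x, 1:] y) y = 0"
    using y(1) unfolding y_def by (simp add: dot_def)
  ultimately show False using dot_self_nonneg[of w] by linarith
qed

lemma min_annihilator_degree_le_2:
  assumes "card {\<mu>. main_eigenvalue V E \<mu>} = 2"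
  shows "degree m \<le> 2"
proof (rule ccontr)
  assume "\<not> degree m \<le> 2"
  then obtain \<mu>1 \<mu>2 \<mu>3 where roots: "distinct [\<mu>1, \<mu>2, \<mu>3]"
    "poly m \<mu>1 = 0" "poly m \<mu>2 = 0" "poly m \<mu>3 = 0"
    using real_rooted_three_roots[OF min_annihilator_real_rooted _ _ min_annihilator_no_double_root]
      min unfolding min_annihilator_def by fastforce
  have "{\<mu>1, \<mu>2, \<mu>3} \<subseteq> {\<mu>. main_eigenvalue V E \<mu>}"
    using roots min_annihilator_root_main by auto
  moreover have "finite {\<mu>. main_eigenvalue V E \<mu>}"
    using assms by (metis card.infinite zero_neq_numeral)
  ultimately have "card {\<mu>1, \<mu>2, \<mu>3} \<le> 2" using assms card_mono by metis
  then show False using roots(1) by simp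
qed

lemma min_annihilator_quadratic_walk_linear:
  assumes deg: "degree m \<le> 2" and "V \<noteq> {}"
  shows "\<exists>a b. adj_op (adj_op ones) = (\<lambda>v. a * adj_op ones v + b * ones v)"
proof -
  have "poly_op m ones v = coeff m 0 * ones v + coeff m 1 * adj_op ones v
      + coeff m 2 * adj_op (adj_op ones) v" for v
    using poly_op_eq_sum[OF deg] by (simp add: eval_nat_numeral)
  then have annih: "coeff m 0 * ones v + coeff m 1 * adj_op ones v
      + coeff m 2 * adj_op (adj_op ones) v = 0" for v
    using min unfolding min_annihilator_def by metis
  show ?thesis
  proof (cases "coeff m 2 = 0")
    case False
    show ?thesis
      using annih False
      by (intro exI[of _ "- coeff m 1 / coeff m 2"] exI[of _ "- coeff m 0 / coeff m 2"] ext)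
        (simp add: field_simps add_eq_0_iff)
  next
    case True
    have "coeff m 1 \<noteq> 0"
    proof
      assume "coeff m 1 = 0"
      then have "coeff m i = 0" if "i > 0" for i
        using that True coeff_eq_0[of m i] deg
        by (cases "i \<le> 2") (auto simp: le_Suc_eq numeral_2_eq_2)
      then have "m = [:coeff m 0:]" by (intro poly_eqI) (auto simp: coeff_pCons split: nat.split)
      then have "coeff m 0 \<noteq> 0" using min unfolding min_annihilator_def by auto
      moreover obtain v where "v \<in> V" using \<open>V \<noteq> {}\<close> by blast
      ultimately show False
        using annih[of v] True \<open>coeff m 1 = 0\<close> unfolding ones_def by simp
    qed
    \<comment> \<open>The graph is regular.\<close>
    define t where "t = - coeff m 0 / coeff m 1"
    have "adj_op ones = (\<lambda>v. t * ones v)"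
      using annih True \<open>coeff m 1 \<noteq> 0\<close> unfolding t_def by (auto simp: field_simps add_eq_0_iff)
    then have "adj_op (adj_op ones) = (\<lambda>v. t * adj_op ones v)"
      by (metis adj_op_scale)
    then show ?thesis by (intro exI[of _ t] exI[of _ 0]) simp
  qed
qed

end

theorem two_main_eigenvalues_walk_linear:
  assumes two_main: "card {\<mu>. main_eigenvalue V E \<mu>} = 2"
  shows "\<exists>a b. adj_op (adj_op ones) = (\<lambda>v. a * adj_op ones v + b * ones v)"
proof -
  obtain m where min: "min_annihilator m" using ex_min_annihilator by blast
  have "V \<noteq> {}"
    using two_main unfolding main_eigenvalue_def is_eigenvector_def by (auto simp: card_eq_0_iff)
  then show ?thesis
    using min_annihilator_quadratic_walk_linear[OF min min_annihilator_degree_le_2[OF min two_main]]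
    by blast
qed

corollary two_main_eigenvalues_degree_sums:
  assumes "card {\<mu>. main_eigenvalue V E \<mu>} = 2"
  obtains a b :: real where
    "\<And>v. v \<in> V \<Longrightarrow> (\<Sum>u\<in>neighbours E v. real (Defs.degree E u)) = a * Defs.degree E v + b"
proof -
  obtain a b where "adj_op (adj_op ones) = (\<lambda>v. a * adj_op ones v + b * ones v)"
    using two_main_eigenvalues_walk_linear[OF assms] by blast
  then have "adj_op (adj_op ones) v = a * adj_op ones v + b * ones v" for v by simp
  then show ?thesis
    by (intro that) (simp add: adj_op_eq_sum_neighbours[of "adj_op ones"] adj_op_ones ones_def)
qed

end

section \<open>Degree constraints on a \<open>\<T>\<^sub>5\<close> core\<close>

text \<open>
  A core vertex with \<open>h\<close> core neighbours has degree \<open>d = h\<close> in \<open>G\<close>, or \<open>d = s = a + b\<close> if it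
  carries pendant vertices (possible only when \<open>P\<close>); then \<open>balanced\<close> says that its core
  neighbours have degree sum \<open>r = (a - 1) d + b + h\<close>. The definition splits the two cases
  (cf. \<open>balanced_iff\<close>) so that each disjunct is linear once \<open>s\<close> is a numeral.
\<close>

definition admissible_degree :: "bool \<Rightarrow> real \<Rightarrow> real \<Rightarrow> real \<Rightarrow> bool" where
  "admissible_degree P s h d \<longleftrightarrow> d = h \<or> (P \<and> d = s \<and> h + 1 \<le> s)"

definition balanced :: "bool \<Rightarrow> real \<Rightarrow> real \<Rightarrow> real \<Rightarrow> real \<Rightarrow> real \<Rightarrow> real \<Rightarrow> bool" where
  "balanced P s a b h d r \<longleftrightarrow>
     (d = h \<and> r = (a - 1) * h + b + h) \<or> (P \<and> d = s \<and> h + 1 \<le> s \<and> r = (a - 1) * s + b + h)"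

text \<open>
  The constraints along one of the five paths, with ends \<open>X\<close>, \<open>Y\<close> of degrees \<open>dX\<close>, \<open>dY\<close>:
  \<open>nX\<close> and \<open>nY\<close> are the degrees of the vertices next to \<open>X\<close> and to \<open>Y\<close> on the path and,
  if it has at least two interior vertices, \<open>w\<close> and \<open>z\<close> those of the vertices two steps
  away from \<open>X\<close> and \<open>Y\<close>.
\<close>

definition path_profile ::
    "bool \<Rightarrow> real \<Rightarrow> real \<Rightarrow> real \<Rightarrow> real \<Rightarrow> real \<Rightarrow> bool \<Rightarrow> real \<Rightarrow> real \<Rightarrow> real \<Rightarrow> real \<Rightarrow> bool" where
  "path_profile P s a b dX dY single nX nY w z \<longleftrightarrow>
     (single \<and> nX = dY \<and> nY = dX) \<or>
     (\<not> single \<and> nX = nY \<and> balanced P s a b 2 nX (dX + dY)) \<or>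
     (\<not> single \<and> admissible_degree P s 2 w \<and> admissible_degree P s 2 z \<and>
        balanced P s a b 2 nX (dX + w) \<and> balanced P s a b 2 nY (dY + z))"

lemma balanced_iff:
  "balanced P s a b h d r \<longleftrightarrow> admissible_degree P s h d \<and> r = (a - 1) * d + b + h"
  unfolding balanced_def admissible_degree_def by auto

lemma T5_profile_no_pendants_infeasible:
  assumes "balanced False s a b 3 dA (nA1 + nA2 + nA3)"
    and "balanced False s a b 4 dB (nB2 + nB3 + nB4 + nB5)"
    and "balanced False s a b 3 dC (nC1 + nC4 + nC5)"
    and "path_profile False s a b dA dC e1 nA1 nC1 w1 z1"
    and "path_profile False s a b dA dB e2 nA2 nB2 w2 z2"
    and "path_profile False s a b dA dB e3 nA3 nB3 w3 z3"
    and "path_profile False s a b dB dC e4 nB4 nC4 w4 z4"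
    and "path_profile False s a b dB dC e5 nB5 nC5 w5 z5"
    and "\<not> (e2 \<and> e3)" "\<not> (e4 \<and> e5)"
  shows False
  using assms unfolding balanced_def path_profile_def admissible_degree_def
  by (smt (z3))

lemma T5_profile_small_attachment_infeasible:
  assumes s: "s = 3 \<or> s = 4 \<or> s = 5 \<or> s = 6 \<or> s = 7 \<or> s = 8" and "b = s - a"
    and "balanced True s a b 3 dA (nA1 + nA2 + nA3)"
    and "balanced True s a b 4 dB (nB2 + nB3 + nB4 + nB5)"
    and "balanced True s a b 3 dC (nC1 + nC4 + nC5)"
    and "path_profile True s a b dA dC e1 nA1 nC1 w1 z1"
    and "path_profile True s a b dA dB e2 nA2 nB2 w2 z2"
    and "path_profile True s a b dA dB e3 nA3 nB3 w3 z3"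
    and "path_profile True s a b dB dC e4 nB4 nC4 w4 z4"
    and "path_profile True s a b dB dC e5 nB5 nC5 w5 z5"
    and "\<not> (e2 \<and> e3)" "\<not> (e4 \<and> e5)"
  shows False
  using s
proof (elim disjE)
qed (insert assms(2-), unfold balanced_def path_profile_def admissible_degree_def, hypsubst,
     smt (z3))+

lemma path_profile_reverse:
  "path_profile P s a b dX dY e nX nY w z \<Longrightarrow> path_profile P s a b dY dX e nY nX z w"
  unfolding path_profile_def by (auto simp: add.commute)

lemma path_profile_end_degree:
  assumes "path_profile True s a b dX dY e nX nY w z" "dX = 3 \<or> dX = s"
  shows "nY = 2 \<or> nY = 3 \<or> nY = s"
  using assms unfolding path_profile_def balanced_def by auto

lemma path_profile_interior_neighbour:
  assumes "path_profile True s a b dX dY e nX nY w z" "\<not> e" "dX = 3 \<or> dX = s"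
  obtains q where "q = 2 \<or> q = 3 \<or> q = s" "nY = 2 \<or> nY = s" "dY + q = (a - 1) * nY + b + 2"
proof -
  from assms(1,2) consider "balanced True s a b 2 nY (dX + dY)"
    | "admissible_degree True s 2 z" "balanced True s a b 2 nY (dY + z)"
    unfolding path_profile_def by auto
  then show ?thesis
  proof cases
    case 1
    then show ?thesis
      using that[of dX] assms(3) unfolding balanced_iff admissible_degree_def by (auto simp: add.commute)
  next
    case 2
    then show ?thesis using that[of z] unfolding balanced_iff admissible_degree_def by auto
  qed
qed

lemma large_attachment_B_infeasible:
  fixes a b s dB r1 r2 r3 r4 n q :: real
  assumes s9: "s \<ge> 9" and b: "b = s - a"
    and dB: "dB = 4 \<or> dB = s"
    and r: "r1 = 2 \<or> r1 = 3 \<or> r1 = s" "r2 = 2 \<or> r2 = 3 \<or> r2 = s"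
           "r3 = 2 \<or> r3 = 3 \<or> r3 = s" "r4 = 2 \<or> r4 = 3 \<or> r4 = s"
    and nr: "n = r1 \<or> n = r2 \<or> n = r3 \<or> n = r4"
    and n: "n = 2 \<or> n = s"
    and q: "q = 2 \<or> q = 3 \<or> q = s"
    and eq_n: "dB + q = (a - 1) * n + b + 2"
    and eq_B: "r1 + r2 + r3 + r4 = (a - 1) * dB + b + 4"
  shows False
proof -
  from dB n consider "dB = 4" "n = 2" | "dB = 4" "n = s" | "dB = s" "n = 2" | "dB = s" "n = s"
    by blast
  then show False
  proof cases
    case 1
    then have "4 + q = a + s" "r1 + r2 + r3 + r4 = 3 * a + s"
      using eq_n eq_B b by (simp_all add: algebra_simps)
    then show False using r q s9 nr 1 by (smt (z3))
  next
    case 2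
    then have e1: "a * (s - 1) = 2 + q" and e2: "r1 + r2 + r3 + r4 = 3 * a + s"
      using eq_n eq_B b by (simp_all add: algebra_simps)
    have "a \<ge> 2" using e2 r nr 2 s9 by (smt (z3))
    then have "a * (s - 1) \<ge> 2 * (s - 1)" using s9 by (intro mult_right_mono) auto
    then show False using e1 q s9 by (smt (z3))
  next
    case 3
    then have a: "a = q" and eq: "r1 + r2 + r3 + r4 = (a - 1) * s + s - a + 4"
      using eq_n eq_B b by (simp_all add: algebra_simps)
    from q consider "q = 2" | "q = 3" | "q = s" by blast
    then show False
    proof cases
      case 1
      then have "r1 + r2 + r3 + r4 = 2 * s + 2" using a eq by (simp add: algebra_simps)
      then show False using r s9 by (smt (z3))
    next
      case 2
      then have "r1 + r2 + r3 + r4 = 3 * s + 1" using a eq by (simp add: algebra_simps)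
      then show False using r s9 by (smt (z3))
    next
      case 3
      then have "r1 + r2 + r3 + r4 = s * s - s + 4" using a eq by (simp add: algebra_simps)
      moreover have "s * s \<ge> 9 * s" using s9 by (intro mult_right_mono) auto
      ultimately show False using r s9 by (smt (z3))
    qed
  next
    case 4
    then have "s + q = (a - 1) * s + s - a + 2" "r1 + r2 + r3 + r4 = (a - 1) * s + s - a + 4"
      using eq_n eq_B b by simp_all
    then show False using r q nr 4 s9 by (smt (z3))
  qed
qed

lemma T5_profile_large_attachment_infeasible:
  assumes "s \<ge> 9" "b = s - a"
    and "balanced True s a b 3 dA rA"
    and "balanced True s a b 4 dB (nB2 + nB3 + nB4 + nB5)"
    and "balanced True s a b 3 dC rC"
    and "path_profile True s a b dA dB e2 nA2 nB2 w2 z2"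
    and "path_profile True s a b dA dB e3 nA3 nB3 w3 z3"
    and "path_profile True s a b dC dB e4 nC4 nB4 w4 z4"
    and "path_profile True s a b dC dB e5 nC5 nB5 w5 z5"
    and "\<not> (e2 \<and> e3)"
  shows False
proof -
  have dA: "dA = 3 \<or> dA = s" and dC: "dC = 3 \<or> dC = s"
    using assms(3,5) unfolding balanced_def by auto
  have dB: "dB = 4 \<or> dB = s" and eq_B: "nB2 + nB3 + nB4 + nB5 = (a - 1) * dB + b + 4"
    using assms(4) unfolding balanced_iff admissible_degree_def by auto
  note nB = path_profile_end_degree[OF assms(6) dA] path_profile_end_degree[OF assms(7) dA]
    path_profile_end_degree[OF assms(8) dC] path_profile_end_degree[OF assms(9) dC]
  obtain q n where "q = 2 \<or> q = 3 \<or> q = s" "n = 2 \<or> n = s" "dB + q = (a - 1) * n + b + 2"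
      "n = nB2 \<or> n = nB3 \<or> n = nB4 \<or> n = nB5"
    using assms(10) path_profile_interior_neighbour[OF assms(6) _ dA]
      path_profile_interior_neighbour[OF assms(7) _ dA] by metis
  then show False
    using large_attachment_B_infeasible[OF assms(1,2) dB nB] eq_B by blast
qed
lemma T5_profile_infeasible:
  assumes attach: "P \<Longrightarrow> a + b \<in> \<nat> \<and> 3 \<le> a + b"
    and A: "balanced P (a + b) a b 3 dA (nA1 + nA2 + nA3)"
    and B: "balanced P (a + b) a b 4 dB (nB2 + nB3 + nB4 + nB5)"
    and C: "balanced P (a + b) a b 3 dC (nC1 + nC4 + nC5)"
    and p1: "path_profile P (a + b) a b dA dC e1 nA1 nC1 w1 z1"
    and p2: "path_profile P (a + b) a b dA dB e2 nA2 nB2 w2 z2"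
    and p3: "path_profile P (a + b) a b dA dB e3 nA3 nB3 w3 z3"
    and p4: "path_profile P (a + b) a b dB dC e4 nB4 nC4 w4 z4"
    and p5: "path_profile P (a + b) a b dB dC e5 nB5 nC5 w5 z5"
    and e23: "\<not> (e2 \<and> e3)" and e45: "\<not> (e4 \<and> e5)"
  shows False
proof (cases P)
  case False
  then have "P = False" by simp
  note profile = A B C p1 p2 p3 p4 p5
  show False
    by (rule T5_profile_no_pendants_infeasible[OF profile[unfolded \<open>P = False\<close>] e23 e45])
next
  case True
  then obtain s :: nat where s: "a + b = s" "3 \<le> s" using attach by (auto elim: Nats_cases)
  then have b: "b = s - a" by simp
  from True have "P = True" by simp
  note profile = A B C p1 p2 p3 p4 p5
  note profile = profile[unfolded s(1) \<open>P = True\<close>]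
  show False
  proof (cases "s \<le> 8")
    case True
    then have "real s = 3 \<or> real s = 4 \<or> real s = 5 \<or> real s = 6 \<or> real s = 7 \<or> real s = 8"
      using s(2) by auto
    then show False
      by (rule T5_profile_small_attachment_infeasible[OF _ b profile e23 e45])
  next
    case False
    then show False
      using T5_profile_large_attachment_infeasible[OF _ b profile(1,2,3,5,6)
          path_profile_reverse[OF profile(7)] path_profile_reverse[OF profile(8)] e23] by simp
  qed
qed

section \<open>The class \<open>\<T>\<^sub>5\<close>\<close>

lemma path_edges_subset: "e \<in> path_edges p \<Longrightarrow> e \<subseteq> set p"
  unfolding path_edges_def by auto

lemma neighbours_path_edges_notin: "v \<notin> set p \<Longrightarrow> neighbours (path_edges p) v = {}"
  unfolding neighbours_def using path_edges_subset by blast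

lemma neighbours_path_edges_nth:
  assumes p: "distinct p" and j: "j < length p"
  shows "neighbours (path_edges p) (p ! j)
    = (if 0 < j then {p ! (j - 1)} else {}) \<union> (if Suc j < length p then {p ! Suc j} else {})"
proof (intro set_eqI iffI)
  fix u assume "u \<in> neighbours (path_edges p) (p ! j)"
  then obtain i where i: "{u, p ! j} = {p ! i, p ! Suc i}" "Suc i < length p"
    unfolding neighbours_def path_edges_def by auto
  then have "(u = p ! i \<and> p ! j = p ! Suc i) \<or> (u = p ! Suc i \<and> p ! j = p ! i)"
    by (auto simp: doubleton_eq_iff)
  moreover have "p ! j = p ! Suc i \<longleftrightarrow> j = Suc i" "p ! j = p ! i \<longleftrightarrow> j = i"
    using p j i(2) by (simp_all add: nth_eq_iff_index_eq)
  ultimately show "u \<in> (if 0 < j then {p ! (j - 1)} else {}) \<union> (if Suc j < length p then {p ! Suc j} else {})"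
    using i(2) by auto
next
  fix u
  assume u: "u \<in> (if 0 < j then {p ! (j - 1)} else {}) \<union> (if Suc j < length p then {p ! Suc j} else {})"
  show "u \<in> neighbours (path_edges p) (p ! j)"
  proof (cases "0 < j \<and> u = p ! (j - 1)")
    case True
    then have "{u, p ! j} = {p ! (j - 1), p ! Suc (j - 1)}" "Suc (j - 1) < length p"
      using j by auto
    then show ?thesis unfolding neighbours_def path_edges_def by blast
  next
    case False
    then have "{u, p ! j} = {p ! j, p ! Suc j}" "Suc j < length p"
      using u by (auto split: if_splits)
    then show ?thesis unfolding neighbours_def path_edges_def by blast
  qed
qed

lemma interior_conv_nth: "interior p = {p ! j | j. 0 < j \<and> j < length p - 1}"
proof -
  have nth: "butlast (tl p) ! k = p ! Suc k" if "k < length p - 2" for k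
    using that by (simp add: nth_butlast nth_tl)
  show ?thesis
  proof (intro set_eqI iffI)
    fix x assume "x \<in> interior p"
    then obtain k where "k < length p - 2" "x = butlast (tl p) ! k"
      unfolding interior_def by (auto simp: in_set_conv_nth numeral_2_eq_2)
    then show "x \<in> {p ! j | j. 0 < j \<and> j < length p - 1}"
      using nth by (intro CollectI exI[of _ "Suc k"]) auto
  next
    fix x assume "x \<in> {p ! j | j. 0 < j \<and> j < length p - 1}"
    then obtain j where "0 < j" "j < length p - 1" "x = p ! j" by blast
    moreover from \<open>0 < j\<close> obtain k where "j = Suc k" by (cases j) auto
    ultimately have "k < length p - 2" "x = p ! Suc k" by auto
    then show "x \<in> interior p"
      unfolding interior_def in_set_conv_nth using nth by (auto simp: numeral_2_eq_2 intro!: exI[of _ k])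
  qed
qed

lemma interior_subset: "interior p \<subseteq> set p"
  unfolding interior_conv_nth by auto

lemma path_between_nth:
  assumes "is_path_between p X Y"
  shows "p ! 0 = X" "p ! (length p - 1) = Y" "set p = {X, Y} \<union> interior p"
proof -
  have p: "p \<noteq> []" "hd p = X" "last p = Y" "length p \<ge> 2"
    using assms unfolding is_path_between_def by auto
  then show X: "p ! 0 = X" and Y: "p ! (length p - 1) = Y"
    by (simp_all add: hd_conv_nth last_conv_nth)
  have "v \<in> {X, Y} \<union> interior p" if "v \<in> set p" for v
  proof -
    obtain j where j: "j < length p" "v = p ! j" using \<open>v \<in> set p\<close> by (auto simp: in_set_conv_nth)
    show ?thesis
    proof (cases "j = 0 \<or> j = length p - 1")
      case True
      then show ?thesis using X Y j(2) by auto
    next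
      case False
      then have "v \<in> interior p" unfolding interior_conv_nth using j by auto
      then show ?thesis by simp
    qed
  qed
  moreover have "X \<in> set p" "Y \<in> set p"
    using p(1-3) hd_in_set last_in_set by blast+
  ultimately show "set p = {X, Y} \<union> interior p" using interior_subset[of p] by blast
qed

locale T5_graph =
  fixes V0 :: "'a set" and E0 :: "'a set set" and A B C :: 'a and p1 p2 p3 p4 p5 :: "'a list"
  assumes distinct_ABC: "distinct [A, B, C]"
    and paths: "is_path_between p1 A C" "is_path_between p2 A B" "is_path_between p3 A B"
      "is_path_between p4 B C" "is_path_between p5 B C"
    and interior_avoids_ABC: "\<forall>i<5. interior ([p1, p2, p3, p4, p5] ! i) \<inter> {A, B, C} = {}"
    and interior_disjoint: "\<forall>i<5. \<forall>j<5. i \<noteq> j \<longrightarrow>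
      interior ([p1, p2, p3, p4, p5] ! i) \<inter> set ([p1, p2, p3, p4, p5] ! j) = {}"
    and edges_disjoint: "\<forall>i<5. \<forall>j<5. i \<noteq> j \<longrightarrow>
      path_edges ([p1, p2, p3, p4, p5] ! i) \<inter> path_edges ([p1, p2, p3, p4, p5] ! j) = {}"
    and V0_eq: "V0 = (\<Union>i<5. set ([p1, p2, p3, p4, p5] ! i))"
    and E0_eq: "E0 = (\<Union>i<5. path_edges ([p1, p2, p3, p4, p5] ! i))"
begin

definition ps where "ps = [p1, p2, p3, p4, p5]"
definition Xs where "Xs = [A, A, A, B, B]"
definition Ys where "Ys = [C, B, B, C, C]"

lemma less_5_iff: "(i::nat) < 5 \<longleftrightarrow> i = 0 \<or> i = 1 \<or> i = 2 \<or> i = 3 \<or> i = 4"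
  by auto

lemma UN_less_5: "(\<Union>k<5. f k) = f 0 \<union> f 1 \<union> f 2 \<union> f 3 \<union> f (4::nat)"
  by (auto simp: less_5_iff)

lemma path_ps: "i < 5 \<Longrightarrow> is_path_between (ps ! i) (Xs ! i) (Ys ! i)"
  unfolding less_5_iff ps_def Xs_def Ys_def using paths by auto

lemma ends_ps: "i < 5 \<Longrightarrow> Xs ! i \<in> {A, B, C} \<and> Ys ! i \<in> {A, B, C} \<and> Xs ! i \<noteq> Ys ! i"
  unfolding less_5_iff Xs_def Ys_def using distinct_ABC by auto

lemma length_ps: "i < 5 \<Longrightarrow> length (ps ! i) \<ge> 2" and distinct_ps: "i < 5 \<Longrightarrow> distinct (ps ! i)"
  using path_ps unfolding is_path_between_def by auto

lemma interior_ps_ABC: "i < 5 \<Longrightarrow> interior (ps ! i) \<inter> {A, B, C} = {}"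
  using interior_avoids_ABC unfolding ps_def by blast

lemma interior_ps_disjoint:
  "i < 5 \<Longrightarrow> j < 5 \<Longrightarrow> i \<noteq> j \<Longrightarrow> interior (ps ! i) \<inter> set (ps ! j) = {}"
  using interior_disjoint unfolding ps_def by blast

lemma edges_ps_disjoint:
  "i < 5 \<Longrightarrow> j < 5 \<Longrightarrow> i \<noteq> j \<Longrightarrow> path_edges (ps ! i) \<inter> path_edges (ps ! j) = {}"
  using edges_disjoint unfolding ps_def by blast

lemma neighbours_E0: "neighbours E0 v = (\<Union>k<5. neighbours (path_edges (ps ! k)) v)"
  unfolding neighbours_def by (auto simp: E0_eq ps_def)

lemma ABC_in_V0: "A \<in> V0" "B \<in> V0" "C \<in> V0"
proof -
  have "set ([p1, p2, p3, p4, p5] ! 0) \<subseteq> V0" "set ([p1, p2, p3, p4, p5] ! 1) \<subseteq> V0"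
    unfolding V0_eq by (rule UN_upper, simp)+
  then show "A \<in> V0" "B \<in> V0" "C \<in> V0"
    using path_between_nth(3)[OF paths(1)] path_between_nth(3)[OF paths(2)] by auto
qed

lemma V0_cases:
  assumes "v \<in> V0"
  obtains "v \<in> {A, B, C}" | i j where "i < 5" "0 < j" "j < length (ps ! i) - 1" "v = ps ! i ! j"
proof -
  obtain i where i: "i < 5" "v \<in> set (ps ! i)" using assms unfolding V0_eq ps_def by auto
  then have "v \<in> {Xs ! i, Ys ! i} \<or> v \<in> interior (ps ! i)"
    using path_between_nth(3)[OF path_ps[OF i(1)]] by auto
  then show ?thesis
    using that ends_ps[OF i(1)] i(1) unfolding interior_conv_nth by auto
qed

lemma neighbours_interior:
  assumes i: "i < 5" and j: "0 < j" "j < length (ps ! i) - 1"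
  shows "neighbours E0 (ps ! i ! j) = {ps ! i ! (j - 1), ps ! i ! Suc j}"
    and "ps ! i ! (j - 1) \<noteq> ps ! i ! Suc j"
proof -
  have v: "ps ! i ! j \<in> interior (ps ! i)" unfolding interior_conv_nth using j by auto
  have "neighbours (path_edges (ps ! k)) (ps ! i ! j) = {}" if "k < 5" "k \<noteq> i" for k
    using v interior_ps_disjoint[OF i that(1)] that(2) by (intro neighbours_path_edges_notin) blast
  then have "neighbours E0 (ps ! i ! j) = neighbours (path_edges (ps ! i)) (ps ! i ! j)"
    unfolding neighbours_E0 using i by blast
  then show "neighbours E0 (ps ! i ! j) = {ps ! i ! (j - 1), ps ! i ! Suc j}"
    using neighbours_path_edges_nth[OF distinct_ps[OF i], of j] j by auto
  show "ps ! i ! (j - 1) \<noteq> ps ! i ! Suc j"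
    using distinct_ps[OF i] j by (simp add: nth_eq_iff_index_eq)
qed

definition after_start :: "nat \<Rightarrow> 'a" where
  "after_start k = ps ! k ! 1"

definition before_end :: "nat \<Rightarrow> 'a" where
  "before_end k = ps ! k ! (length (ps ! k) - 2)"

lemma after_start_cases:
  assumes "k < 5"
  shows "after_start k \<in> interior (ps ! k) \<or> (after_start k = Ys ! k \<and> length (ps ! k) = 2)"
proof (cases "length (ps ! k) = 2")
  case True
  then show ?thesis using path_between_nth(2)[OF path_ps[OF assms]] unfolding after_start_def by simp
next
  case False
  then show ?thesis
    using length_ps[OF assms] unfolding after_start_def interior_conv_nth by force
qed

lemma before_end_cases:
  assumes "k < 5"
  shows "before_end k \<in> interior (ps ! k) \<or> (before_end k = Xs ! k \<and> length (ps ! k) = 2)"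
proof (cases "length (ps ! k) = 2")
  case True
  then show ?thesis using path_between_nth(1)[OF path_ps[OF assms]] unfolding before_end_def by simp
next
  case False
  then have "0 < length (ps ! k) - 2" "length (ps ! k) - 2 < length (ps ! k) - 1"
    using length_ps[OF assms] by auto
  then show ?thesis unfolding before_end_def interior_conv_nth by blast
qed

lemma neighbours_path_end:
  assumes k: "k < 5" and v: "v \<in> {A, B, C}"
  shows "neighbours (path_edges (ps ! k)) v
    = (if v = Xs ! k then {after_start k} else {}) \<union> (if v = Ys ! k then {before_end k} else {})"
proof -
  note p = path_between_nth[OF path_ps[OF k]]
  have "v \<notin> interior (ps ! k)" using interior_ps_ABC[OF k] v by blast
  moreover have "Xs ! k \<noteq> Ys ! k" using ends_ps[OF k] by blast
  have "ps ! k \<noteq> []" using length_ps[OF k] by auto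
  moreover have "neighbours (path_edges (ps ! k)) (Xs ! k) = {after_start k}"
    using neighbours_path_edges_nth[OF distinct_ps[OF k], of 0] length_ps[OF k] p(1) \<open>ps ! k \<noteq> []\<close>
    unfolding after_start_def by simp
  moreover have "neighbours (path_edges (ps ! k)) (Ys ! k) = {before_end k}"
  proof -
    let ?L = "length (ps ! k)"
    have "?L - 1 < ?L" "\<not> Suc (?L - 1) < ?L" "?L - 1 - 1 = ?L - 2" "0 < ?L - 1"
      using length_ps[OF k] by auto
    then show ?thesis
      using neighbours_path_edges_nth[OF distinct_ps[OF k], of "?L - 1"] p(2)
      unfolding before_end_def by simp
  qed
  ultimately show ?thesis
    using neighbours_path_edges_notin[of v "ps ! k"] p(3) by auto
qed

lemma single_edges_not_parallel:
  assumes "k < 5" "l < 5" "k \<noteq> l" "Xs ! k = Xs ! l" "Ys ! k = Ys ! l"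
  shows "\<not> (length (ps ! k) = 2 \<and> length (ps ! l) = 2)"
proof
  assume "length (ps ! k) = 2 \<and> length (ps ! l) = 2"
  then have "{ps ! k ! 0, ps ! k ! 1} \<in> path_edges (ps ! k)" "{ps ! l ! 0, ps ! l ! 1} \<in> path_edges (ps ! l)"
    unfolding path_edges_def by force+
  moreover have "ps ! k ! 0 = ps ! l ! 0" "ps ! k ! 1 = ps ! l ! 1"
    using path_between_nth(1,2)[OF path_ps[OF assms(1)]] path_between_nth(1,2)[OF path_ps[OF assms(2)]]
      assms(4,5) \<open>length (ps ! k) = 2 \<and> length (ps ! l) = 2\<close> by simp_all
  ultimately show False using edges_ps_disjoint[OF assms(1-3)] by auto
qed

lemma end_neighbours_differ:
  assumes kl: "k < 5" "l < 5" "k \<noteq> l"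
    and u: "u \<in> interior (ps ! k) \<or> (u = Ek \<and> length (ps ! k) = 2)"
    and w: "w \<in> interior (ps ! l) \<or> (w = El \<and> length (ps ! l) = 2)"
    and ends: "Ek \<in> {A, B, C}" "El \<in> {A, B, C}"
    and not_parallel: "length (ps ! k) = 2 \<Longrightarrow> length (ps ! l) = 2 \<Longrightarrow> Ek \<noteq> El"
  shows "u \<noteq> w"
proof
  assume "u = w"
  have "u \<notin> interior (ps ! k)"
    using w interior_ps_disjoint[OF kl] interior_subset[of "ps ! l"] ends(2) interior_ps_ABC[OF kl(1)]
      \<open>u = w\<close> by blast
  moreover have "w \<notin> interior (ps ! l)"
    using u interior_ps_disjoint[OF kl(2,1)] kl(3) interior_subset[of "ps ! k"] ends(1)
      interior_ps_ABC[OF kl(2)] \<open>u = w\<close> by blast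
  ultimately show False using u w not_parallel \<open>u = w\<close> by blast
qed

lemma neighbours_A:
  "neighbours E0 A = {after_start 0, after_start 1, after_start 2}"
  "distinct [after_start 0, after_start 1, after_start 2]"
proof -
  have ABC: "A \<noteq> B" "A \<noteq> C" "B \<noteq> C" using distinct_ABC by auto
  show "neighbours E0 A = {after_start 0, after_start 1, after_start 2}"
    unfolding neighbours_E0 UN_less_5 using neighbours_path_end ABC
    by (simp add: Xs_def Ys_def insert_commute)
  note start = after_start_cases[of 0] after_start_cases[of 1] after_start_cases[of 2]
  have "\<not> (length (ps ! 1) = 2 \<and> length (ps ! 2) = 2)"
    by (rule single_edges_not_parallel) (simp_all add: Xs_def Ys_def)
  then show "distinct [after_start 0, after_start 1, after_start 2]"
    using end_neighbours_differ[of 0 1, OF _ _ _ start(1,2)] end_neighbours_differ[of 0 2, OF _ _ _ start(1,3)]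
      end_neighbours_differ[of 1 2, OF _ _ _ start(2,3)] ABC
    by (auto simp: Ys_def)
qed

lemma neighbours_C:
  "neighbours E0 C = {before_end 0, before_end 3, before_end 4}"
  "distinct [before_end 0, before_end 3, before_end 4]"
proof -
  have ABC: "A \<noteq> B" "A \<noteq> C" "B \<noteq> C" using distinct_ABC by auto
  show "neighbours E0 C = {before_end 0, before_end 3, before_end 4}"
    unfolding neighbours_E0 UN_less_5 using neighbours_path_end ABC
    by (simp add: Xs_def Ys_def insert_commute)
  note before = before_end_cases[of 0] before_end_cases[of 3] before_end_cases[of 4]
  have "\<not> (length (ps ! 3) = 2 \<and> length (ps ! 4) = 2)"
    by (rule single_edges_not_parallel) (simp_all add: Xs_def Ys_def)
  then show "distinct [before_end 0, before_end 3, before_end 4]"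
    using end_neighbours_differ[of 0 3, OF _ _ _ before(1,2)] end_neighbours_differ[of 0 4, OF _ _ _ before(1,3)]
      end_neighbours_differ[of 3 4, OF _ _ _ before(2,3)] ABC
    by (auto simp: Xs_def)
qed

lemma neighbours_B:
  "neighbours E0 B = {before_end 1, before_end 2, after_start 3, after_start 4}"
  "distinct [before_end 1, before_end 2, after_start 3, after_start 4]"
proof -
  have ABC: "A \<noteq> B" "A \<noteq> C" "B \<noteq> C" using distinct_ABC by auto
  show "neighbours E0 B = {before_end 1, before_end 2, after_start 3, after_start 4}"
    unfolding neighbours_E0 UN_less_5 using neighbours_path_end ABC
    by (simp add: Xs_def Ys_def insert_commute)
  note nbr = before_end_cases[of 1] before_end_cases[of 2] after_start_cases[of 3] after_start_cases[of 4]
  have "\<not> (length (ps ! 1) = 2 \<and> length (ps ! 2) = 2)" "\<not> (length (ps ! 3) = 2 \<and> length (ps ! 4) = 2)"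
    by (rule single_edges_not_parallel; simp add: Xs_def Ys_def)+
  then show "distinct [before_end 1, before_end 2, after_start 3, after_start 4]"
    using end_neighbours_differ[of 1 2, OF _ _ _ nbr(1,2)] end_neighbours_differ[of 1 3, OF _ _ _ nbr(1,3)]
      end_neighbours_differ[of 1 4, OF _ _ _ nbr(1,4)] end_neighbours_differ[of 2 3, OF _ _ _ nbr(2,3)]
      end_neighbours_differ[of 2 4, OF _ _ _ nbr(2,4)] end_neighbours_differ[of 3 4, OF _ _ _ nbr(3,4)] ABC
    by (auto simp: Xs_def Ys_def)
qed

lemma card_neighbours_ge_2: "v \<in> V0 \<Longrightarrow> card (neighbours E0 v) \<ge> 2"
proof (erule V0_cases)
  assume "v \<in> {A, B, C}"
  then show ?thesis using neighbours_A neighbours_B neighbours_C by auto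
next
  fix i j assume "i < 5" "0 < j" "j < length (ps ! i) - 1" "v = ps ! i ! j"
  then show ?thesis using neighbours_interior by simp
qed

context
  fixes dg :: "'a \<Rightarrow> nat" and P :: bool and a b :: real
  assumes balanced_V0: "\<And>v. v \<in> V0 \<Longrightarrow>
    balanced P (a + b) a b (card (neighbours E0 v)) (dg v) (\<Sum>u\<in>neighbours E0 v. real (dg u))"
begin

lemma balanced_interior:
  assumes "i < 5" "0 < j" "j < length (ps ! i) - 1"
  shows "balanced P (a + b) a b 2 (dg (ps ! i ! j)) (real (dg (ps ! i ! (j - 1))) + real (dg (ps ! i ! Suc j)))"
proof -
  have "ps ! i ! j \<in> set (ps ! i)" using assms(3) by simp
  then have "ps ! i ! j \<in> V0" using assms(1) unfolding V0_eq ps_def by blast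
  then show ?thesis using balanced_V0[of "ps ! i ! j"] neighbours_interior[OF assms] by simp
qed

lemma admissible_interior:
  "i < 5 \<Longrightarrow> 0 < j \<Longrightarrow> j < length (ps ! i) - 1 \<Longrightarrow> admissible_degree P (a + b) 2 (dg (ps ! i ! j))"
  using balanced_interior unfolding balanced_iff by blast

lemma path_profile_ps:
  assumes i: "i < 5"
  shows "\<exists>w z. path_profile P (a + b) a b (dg (Xs ! i)) (dg (Ys ! i)) (length (ps ! i) = 2)
    (dg (after_start i)) (dg (before_end i)) w z"
proof -
  note ends = path_between_nth(1,2)[OF path_ps[OF i]]
  define L where "L = length (ps ! i)"
  have "L \<ge> 2" using length_ps[OF i] unfolding L_def .
  then consider "L = 2" | "L = 3" | "L \<ge> 4" by linarith
  then show ?thesis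
  proof cases
    case 1
    then show ?thesis
      using ends unfolding path_profile_def after_start_def before_end_def L_def[symmetric] by auto
  next
    case 2
    then have "balanced P (a + b) a b 2 (dg (ps ! i ! 1)) (real (dg (Xs ! i)) + real (dg (Ys ! i)))"
      using balanced_interior[OF i, of 1] ends unfolding L_def by (simp add: numeral_2_eq_2)
    then show ?thesis
      using 2 unfolding path_profile_def after_start_def before_end_def L_def[symmetric] by auto
  next
    case 3
    have "L - 2 - 1 = L - 3" "Suc (L - 2) = L - 1" using 3 by auto
    then have "balanced P (a + b) a b 2 (dg (ps ! i ! (L - 2))) (real (dg (Ys ! i)) + real (dg (ps ! i ! (L - 3))))"
      using balanced_interior[OF i, of "L - 2"] 3 ends(2) unfolding L_def by (simp add: add.commute)
    moreover have "balanced P (a + b) a b 2 (dg (ps ! i ! 1)) (real (dg (Xs ! i)) + real (dg (ps ! i ! 2)))"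
      using balanced_interior[OF i, of 1] 3 ends(1) unfolding L_def by (simp add: numeral_2_eq_2)
    moreover have "admissible_degree P (a + b) 2 (dg (ps ! i ! 2))"
      "admissible_degree P (a + b) 2 (dg (ps ! i ! (L - 3)))"
      using admissible_interior[OF i, of 2] admissible_interior[OF i, of "L - 3"] 3
      unfolding L_def by simp_all
    ultimately show ?thesis
      using 3 unfolding path_profile_def after_start_def before_end_def L_def[symmetric] by auto
  qed
qed

lemma balanced_degrees_impossible:
  assumes attach: "P \<Longrightarrow> \<exists>v\<in>V0. real (dg v) = a + b \<and> card (neighbours E0 v) < dg v"
  shows False
proof -
  have "a + b \<in> \<nat> \<and> 3 \<le> a + b" if P
  proof -
    obtain v where "v \<in> V0" "real (dg v) = a + b" "card (neighbours E0 v) < dg v"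
      using attach \<open>P\<close> by blast
    moreover have "card (neighbours E0 v) \<ge> 2" using card_neighbours_ge_2[OF \<open>v \<in> V0\<close>] .
    ultimately have "real (dg v) \<ge> 3" by simp
    with \<open>real (dg v) = a + b\<close> show ?thesis by (metis of_nat_in_Nats)
  qed
  moreover have "balanced P (a + b) a b 3 (dg A)
      (real (dg (after_start 0)) + real (dg (after_start 1)) + real (dg (after_start 2)))"
    using balanced_V0[OF ABC_in_V0(1)] neighbours_A by (simp add: add.assoc)
  moreover have "balanced P (a + b) a b 4 (dg B)
      (real (dg (before_end 1)) + real (dg (before_end 2)) + real (dg (after_start 3))
        + real (dg (after_start 4)))"
    using balanced_V0[OF ABC_in_V0(2)] neighbours_B by (simp add: add.assoc)
  moreover have "balanced P (a + b) a b 3 (dg C)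
      (real (dg (before_end 0)) + real (dg (before_end 3)) + real (dg (before_end 4)))"
    using balanced_V0[OF ABC_in_V0(3)] neighbours_C by (simp add: add.assoc)
  moreover obtain w1 z1 w2 z2 w3 z3 w4 z4 w5 z5 where
    "path_profile P (a + b) a b (dg A) (dg C) (length (ps ! 0) = 2) (dg (after_start 0)) (dg (before_end 0)) w1 z1"
    "path_profile P (a + b) a b (dg A) (dg B) (length (ps ! 1) = 2) (dg (after_start 1)) (dg (before_end 1)) w2 z2"
    "path_profile P (a + b) a b (dg A) (dg B) (length (ps ! 2) = 2) (dg (after_start 2)) (dg (before_end 2)) w3 z3"
    "path_profile P (a + b) a b (dg B) (dg C) (length (ps ! 3) = 2) (dg (after_start 3)) (dg (before_end 3)) w4 z4"
    "path_profile P (a + b) a b (dg B) (dg C) (length (ps ! 4) = 2) (dg (after_start 4)) (dg (before_end 4)) w5 z5"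
    using path_profile_ps[of 0] path_profile_ps[of 1] path_profile_ps[of 2] path_profile_ps[of 3]
      path_profile_ps[of 4] unfolding Xs_def Ys_def by auto
  moreover have "\<not> (length (ps ! 1) = 2 \<and> length (ps ! 2) = 2)"
    "\<not> (length (ps ! 3) = 2 \<and> length (ps ! 4) = 2)"
    by (rule single_edges_not_parallel; simp add: Xs_def Ys_def)+
  ultimately show False by (rule T5_profile_infeasible)
qed

end

end

section \<open>Pendant vertices\<close>

context finite_graph
begin

lemma neighbours_del_pendant:
  assumes "v \<in> del_pendant_V V E"
  shows "neighbours (del_pendant_E V E) v = neighbours E v \<inter> del_pendant_V V E"
  using assms unfolding neighbours_def del_pendant_E_def by auto

lemma neighbours_split:
  assumes "v \<in> del_pendant_V V E"
  shows "neighbours E v = (neighbours E v \<inter> del_pendant_V V E) \<union> (neighbours E v \<inter> pendant_vertices V E)"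
    and "(neighbours E v \<inter> del_pendant_V V E) \<inter> (neighbours E v \<inter> pendant_vertices V E) = {}"
  using neighbours_eq unfolding del_pendant_V_def by auto

context
  fixes a b :: real
  assumes degree_sums:
    "\<And>v. v \<in> V \<Longrightarrow> (\<Sum>u\<in>neighbours E v. real (Defs.degree E u)) = a * Defs.degree E v + b"
begin

lemma degree_pendant_neighbour:
  assumes w: "w \<in> pendant_vertices V E" and v: "v \<in> neighbours E w"
  shows "Defs.degree E v = a + b"
proof -
  have "w \<in> V" "card (neighbours E w) = 1"
    using w degree_eq_card_neighbours unfolding pendant_vertices_def by auto
  then have "neighbours E w = {v}" using v by (metis card_1_singletonE singletonD)
  then show ?thesis using degree_sums[OF \<open>w \<in> V\<close>] w unfolding pendant_vertices_def by simp
qed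

lemma core_degree_sum:
  assumes v: "v \<in> del_pendant_V V E"
  shows "(\<Sum>u\<in>neighbours E v \<inter> del_pendant_V V E. real (Defs.degree E u))
    = (a - 1) * Defs.degree E v + b + card (neighbours E v \<inter> del_pendant_V V E)"
proof -
  let ?core = "neighbours E v \<inter> del_pendant_V V E" and ?pend = "neighbours E v \<inter> pendant_vertices V E"
  have fin: "finite ?core" "finite ?pend" using finite_neighbours by auto
  have "v \<in> V" using v unfolding del_pendant_V_def by simp
  have "a * Defs.degree E v + b = (\<Sum>u\<in>?core \<union> ?pend. real (Defs.degree E u))"
    using degree_sums[OF \<open>v \<in> V\<close>] by (simp only: neighbours_split(1)[OF v, symmetric])
  also have "\<dots> = (\<Sum>u\<in>?core. real (Defs.degree E u)) + (\<Sum>u\<in>?pend. real (Defs.degree E u))"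
    by (rule sum.union_disjoint[OF fin neighbours_split(2)[OF v]])
  also have "(\<Sum>u\<in>?pend. real (Defs.degree E u)) = card ?pend"
    unfolding pendant_vertices_def by simp
  also have "card ?pend = real (Defs.degree E v) - card ?core"
    using card_Un_disjoint[OF fin neighbours_split(2)[OF v]] neighbours_split(1)[OF v]
    by (simp add: degree_eq_card_neighbours)
  finally show ?thesis by (simp add: algebra_simps)
qed

lemma core_degree_without_pendants:
  assumes v: "v \<in> del_pendant_V V E" and "neighbours E v \<inter> pendant_vertices V E = {}"
  shows "Defs.degree E v = card (neighbours E v \<inter> del_pendant_V V E)"
  using neighbours_split(1)[OF v] assms(2) by (simp add: degree_eq_card_neighbours)

lemma core_degree_with_pendants:
  assumes v: "v \<in> del_pendant_V V E" and "neighbours E v \<inter> pendant_vertices V E \<noteq> {}"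
  shows "Defs.degree E v = a + b" "card (neighbours E v \<inter> del_pendant_V V E) < Defs.degree E v"
proof -
  obtain w where w: "w \<in> pendant_vertices V E" "w \<in> neighbours E v" using assms(2) by blast
  then have "v \<in> neighbours E w" unfolding neighbours_def by (simp add: insert_commute)
  then show "Defs.degree E v = a + b" using degree_pendant_neighbour[OF w(1)] by simp
  show "card (neighbours E v \<inter> del_pendant_V V E) < Defs.degree E v"
    unfolding degree_eq_card_neighbours using finite_neighbours w
    by (intro psubset_card_mono) (auto simp: del_pendant_V_def)
qed

lemma core_vertex_balanced:
  assumes v: "v \<in> del_pendant_V V E"
  shows "balanced (\<exists>u\<in>del_pendant_V V E. neighbours E u \<inter> pendant_vertices V E \<noteq> {}) (a + b) a b
    (card (neighbours (del_pendant_E V E) v)) (Defs.degree E v)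
    (\<Sum>u\<in>neighbours (del_pendant_E V E) v. real (Defs.degree E u))"
  unfolding balanced_iff admissible_degree_def neighbours_del_pendant[OF v]
proof (intro conjI)
  show "(\<Sum>u\<in>neighbours E v \<inter> del_pendant_V V E. real (Defs.degree E u))
      = (a - 1) * Defs.degree E v + b + card (neighbours E v \<inter> del_pendant_V V E)"
    by (rule core_degree_sum[OF v])
  show "real (Defs.degree E v) = real (card (neighbours E v \<inter> del_pendant_V V E)) \<or>
      (\<exists>u\<in>del_pendant_V V E. neighbours E u \<inter> pendant_vertices V E \<noteq> {}) \<and>
      real (Defs.degree E v) = a + b \<and> real (card (neighbours E v \<inter> del_pendant_V V E)) + 1 \<le> a + b"
  proof (cases "neighbours E v \<inter> pendant_vertices V E = {}")
    case True
    then show ?thesis using core_degree_without_pendants[OF v] by simp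
  next
    case False
    then show ?thesis using core_degree_with_pendants[OF v] v by force
  qed
qed

lemma pendant_attachment:
  assumes "\<exists>u\<in>del_pendant_V V E. neighbours E u \<inter> pendant_vertices V E \<noteq> {}"
  shows "\<exists>v\<in>del_pendant_V V E. real (Defs.degree E v) = a + b \<and>
    card (neighbours (del_pendant_E V E) v) < Defs.degree E v"
  using assms core_degree_with_pendants neighbours_del_pendant by metis

end

end

theorem lemma3p6:
  fixes V :: "'a set" and E :: "'a set set"
  assumes "simple_graph V E"
    and "connected_graph V E"
    and "card E = card V + 2"
    and "card {\<mu>. main_eigenvalue V E \<mu>} = 2"
  shows "\<not> in_T5 (del_pendant_V V E) (del_pendant_E V E)"
proof
  assume "in_T5 (del_pendant_V V E) (del_pendant_E V E)"
  then obtain A B C p1 p2 p3 p4 p5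
    where T5: "T5_graph (del_pendant_V V E) (del_pendant_E V E) A B C p1 p2 p3 p4 p5"
    unfolding in_T5_def Let_def by (elim exE conjE) (rule that, rule T5_graph.intro; assumption)
  interpret finite_graph V E by (rule finite_graph.intro) (rule assms(1))
  obtain a b :: real where
    "\<And>v. v \<in> V \<Longrightarrow> (\<Sum>u\<in>neighbours E v. real (Defs.degree E u)) = a * Defs.degree E v + b"
    using two_main_eigenvalues_degree_sums[OF assms(4)] by blast
  then show False
    using T5_graph.balanced_degrees_impossible[OF T5 core_vertex_balanced pendant_attachment] by blast
qed

end
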